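(* Let $n\ge1$ and let $p=p_1\cdots p_{n-1}1$ be a strongly 312-avoiding permutation of $\{1,\dots,n\}$ ending in the entry $1$. Then the smallest $\lceil n/2\rceil$ entries of $p$ occupy the last $\lceil n/2\rceil$ positions in decreasing order; that is, $p_{n-j+1}=j$ for all $j=1,\dots,\lceil n/2\rceil$.
   Context: Permutations are written in one-line notation $p=p_1\cdots p_n$ with $p_i=p(i)$. $p$ contains a pattern $q=q_1\cdots q_m$ if there are indices $i_1<\cdots<i_m$ with $p_{i_r}<p_{i_s}$ iff $q_r<q_s$; otherwise $p$ avoids $q$. $p^2(i)=p(p(i))$. A permutation $p$ is strongly $q$-avoiding if both $p$ and $p^2$ avoid $q$. *)

theory Defs
  imports "HOL-Combinatorics.Permutations"
begin

text \<open>Permutations of {1..n} are functions nat => nat with  p permutes {1..n};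
  one-line notation p_i = p i.  A pattern q of length m is given as a list
  (one-line notation of a permutation of {1..m}).\<close>

definition contains_pattern :: "nat \<Rightarrow> (nat \<Rightarrow> nat) \<Rightarrow> nat list \<Rightarrow> bool" where
  "contains_pattern n p q \<longleftrightarrow>
     (\<exists>ix :: nat \<Rightarrow> nat.
        (\<forall>r < length q. ix r \<in> {1..n}) \<and>
        (\<forall>r s. r < s \<and> s < length q \<longrightarrow> ix r < ix s) \<and>
        (\<forall>r < length q. \<forall>s < length q. (p (ix r) < p (ix s) \<longleftrightarrow> q ! r < q ! s)))"

definition avoids_pattern :: "nat \<Rightarrow> (nat \<Rightarrow> nat) \<Rightarrow> nat list \<Rightarrow> bool" where
  "avoids_pattern n p q \<longleftrightarrow> \<not> contains_pattern n p q"

definition strongly_avoiding :: "nat \<Rightarrow> (nat \<Rightarrow> nat) \<Rightarrow> nat list \<Rightarrow> bool" where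
  "strongly_avoiding n p q \<longleftrightarrow> avoids_pattern n p q \<and> avoids_pattern n (p \<circ> p) q"

end

theory Submission
  imports Defs
begin

text \<open>Induction on \<open>j\<close>: suppose the last \<open>j - 1\<close> positions already hold \<open>j - 1, \<dots>, 1\<close>, so the
  values \<open>\<ge> j\<close> fill the block of positions \<open>1..k\<close> with \<open>k = n - j + 1\<close>, and suppose the minimum \<open>j\<close>
  of that block sits at a position \<open>m < k\<close>. Avoiding 312, \<open>p\<close> increases across \<open>m\<close> inside the
  block and places the value \<open>n\<close> at some position \<open>t > m\<close>. Since \<open>p\<^sup>2 t = p n = 1\<close> and
  \<open>p\<^sup>2 n = p 1\<close>, it suffices to find \<open>a < t\<close> with \<open>p\<^sup>2 a > p 1\<close> to get a 312 in \<open>p\<^sup>2\<close>: take for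
  \<open>a\<close> the position of a value \<open>v\<close> of the block with \<open>m < v\<close>, namely \<open>v = j\<close> (if \<open>m = 1\<close> or
  \<open>m < j\<close>) or \<open>v = m + 1\<close>, whose position is forced left of \<open>m\<close> by counting.\<close>

lemma contains_312I:
  fixes f :: "nat \<Rightarrow> nat"
  assumes "1 \<le> a" "a < b" "b < c" "c \<le> n" "f b < f c" "f c < f a"
  shows "contains_pattern n f [3,1,2]"
  unfolding contains_pattern_def
  by (rule exI[of _ "nth [a, b, c]"]) (use assms in \<open>auto simp: less_Suc_eq numeral_eq_Suc\<close>)

lemma avoids_312_increasing_across_smaller:
  fixes p :: "nat \<Rightarrow> nat"
  assumes "\<not> contains_pattern n p [3,1,2]" and "inj_on p {1..n}"
    and "1 \<le> a" "a < m" "m < b" "b \<le> n" "p m < p b"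
  shows "p a < p b"
proof -
  have "a \<in> {1..n}" "b \<in> {1..n}" "a \<noteq> b" using assms(3-6) by auto
  then have "p a \<noteq> p b" using assms(2) by (meson inj_on_contraD)
  moreover have "\<not> p b < p a" using assms(1,3-7) contains_312I[of a m b n p] by blast
  ultimately show ?thesis by simp
qed

locale reversed_suffix =
  fixes n j k :: nat and p :: "nat \<Rightarrow> nat"
  assumes perm: "p permutes {1..n}"
    and avoids: "\<not> contains_pattern n p [3,1,2]"
    and suffix: "\<And>i. 1 \<le> i \<Longrightarrow> i < j \<Longrightarrow> p (n - i + 1) = i"
    and j_ge: "2 \<le> j" and j_le: "j \<le> (n + 1) div 2"
    and k_def: "k = n - j + 1"
begin

lemma k_bounds: "j \<le> k" "k < n" "2 \<le> k"
  using j_ge j_le unfolding k_def by linarith+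

lemma inj: "inj p"
  using perm by (rule permutes_inj)

lemma in_range: "q \<in> {1..n} \<Longrightarrow> p q \<in> {1..n}"
  by (rule permutes_in_image[OF perm, THEN iffD2])

lemma position_of:
  assumes "v \<in> {1..n}"
  obtains q where "q \<in> {1..n}" "p q = v"
  using assms permutes_image[OF perm] by (metis imageE)

lemma p_last: "p n = 1"
  using suffix[of 1] j_ge k_bounds(2) by simp

lemma ge_j_iff_in_block:
  assumes "q \<in> {1..n}"
  shows "j \<le> p q \<longleftrightarrow> q \<le> k"
proof
  assume "j \<le> p q"
  show "q \<le> k"
  proof (rule ccontr)
    assume "\<not> q \<le> k"
    then have "p (n - (n - q + 1) + 1) = n - q + 1"
      using assms by (intro suffix) (auto simp: k_def)
    with assms \<open>\<not> q \<le> k\<close> \<open>j \<le> p q\<close> show False by (auto simp: k_def)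
  qed
next
  assume "q \<le> k"
  show "j \<le> p q"
  proof (rule ccontr)
    assume "\<not> j \<le> p q"
    have "p q \<in> {1..n}" using in_range assms by blast
    with \<open>\<not> j \<le> p q\<close> have "p (n - p q + 1) = p q" by (intro suffix) auto
    then have "n - p q + 1 = q" using inj by (simp add: inj_eq)
    with \<open>p q \<in> {1..n}\<close> \<open>\<not> j \<le> p q\<close> \<open>q \<le> k\<close> k_bounds show False unfolding k_def by linarith
  qed
qed

context
  fixes m :: nat
  assumes m: "m \<in> {1..n}" "p m = j" and m_lt: "m < k"
begin

lemma above_j_in_block:
  assumes "1 \<le> q" "q \<le> k" "q \<noteq> m"
  shows "j < p q"
proof -
  have "q \<in> {1..n}" using assms k_bounds by auto
  then have "j \<le> p q" using ge_j_iff_in_block assms by blast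
  moreover have "p q \<noteq> p m" using inj assms(3) by (simp add: inj_eq)
  ultimately show ?thesis using m by simp
qed

lemma increasing_across_min:
  assumes "1 \<le> a" "a < m" "m < b" "b \<le> k"
  shows "p a < p b"
proof (rule avoids_312_increasing_across_smaller[OF avoids _ assms(1-3)])
  show "inj_on p {1..n}" using inj by (rule inj_on_subset) simp
  show "b \<le> n" using assms(4) k_bounds by simp
  show "p m < p b" using above_j_in_block[of b] assms m by simp
qed

lemma max_position:
  assumes "t \<in> {1..n}" "p t = n"
  shows "m < t" "t \<le> k"
proof -
  show "t \<le> k" using ge_j_iff_in_block[OF assms(1)] assms(2) k_bounds by simp
  show "m < t"
  proof (rule ccontr)
    assume "\<not> m < t"
    moreover have "t \<noteq> m" using assms m k_bounds by auto
    ultimately have "p t < p k" using increasing_across_min[of t k] assms m_lt by auto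
    with assms in_range[of k] k_bounds show False by auto
  qed
qed

text \<open>The values \<open>j + 1, \<dots>, m\<close> are too few to fill the \<open>m - 1\<close> positions left of \<open>m\<close>, all of
  which would lie below \<open>m + 1\<close> if \<open>m + 1\<close> were placed right of \<open>m\<close>.\<close>
lemma succ_position_before_min:
  assumes "j \<le> m" "b \<in> {1..n}" "p b = m + 1"
  shows "b < m"
proof (rule ccontr)
  assume "\<not> b < m"
  moreover have "b \<noteq> m" using assms m by auto
  ultimately have "m < b" by simp
  have "b \<le> k" using ge_j_iff_in_block[OF assms(2)] assms(1,3) by simp
  have "p ` {1..<m} \<subseteq> {j + 1..m}"
  proof
    fix y assume "y \<in> p ` {1..<m}"
    then obtain a where a: "a \<in> {1..<m}" "y = p a" by auto
    then show "y \<in> {j + 1..m}"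
      using increasing_across_min[of a b] above_j_in_block[of a] assms \<open>m < b\<close> \<open>b \<le> k\<close> m_lt by auto
  qed
  then have "card (p ` {1..<m}) \<le> card {j + 1..m}" by (intro card_mono) auto
  moreover have "card (p ` {1..<m}) = m - 1"
    using inj_on_subset[OF inj] by (simp add: card_image)
  ultimately show False using j_ge assms by simp
qed

lemma square_contains_312: "contains_pattern n (p \<circ> p) [3,1,2]"
proof -
  obtain t where t: "t \<in> {1..n}" "p t = n" using position_of[of n] k_bounds by auto
  have "\<exists>a. 1 \<le> a \<and> a < t \<and> p 1 < p (p a)"
  proof (cases "m = 1 \<or> m < j")
    case True
    have "p 1 < p j"
    proof (cases "m = 1")
      case True
      then show ?thesis using above_j_in_block[of j] m k_bounds j_ge by auto
    next
      case False
      then show ?thesis using increasing_across_min[of 1 j] True m k_bounds by auto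
    qed
    then show ?thesis using m max_position t by auto
  next
    case False
    obtain b where b: "b \<in> {1..n}" "p b = m + 1" using position_of[of "m + 1"] m_lt k_bounds by auto
    have "p 1 < p (m + 1)" using increasing_across_min[of 1 "m + 1"] False m m_lt by auto
    moreover have "b < t" using succ_position_before_min[OF _ b] max_position[OF t] False by auto
    ultimately show ?thesis using b by auto
  qed
  then obtain a where "1 \<le> a" "a < t" "p 1 < p (p a)" by blast
  moreover have "1 < p 1" using ge_j_iff_in_block[of 1] k_bounds j_ge by auto
  ultimately show ?thesis
    using contains_312I[of a t n n "p \<circ> p"] t max_position[OF t] k_bounds p_last by auto
qed

end

lemma next_value:
  assumes "\<not> contains_pattern n (p \<circ> p) [3,1,2]"
  shows "p k = j"
proof -
  obtain m where m: "m \<in> {1..n}" "p m = j" using position_of[of j] j_ge k_bounds by auto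
  have "m \<le> k" using ge_j_iff_in_block m by auto
  moreover have "\<not> m < k" using square_contains_312[OF m] assms by blast
  ultimately show ?thesis using m by simp
qed

end

theorem lemma3p4:
  fixes n :: nat and p :: "nat \<Rightarrow> nat"
  assumes "n \<ge> 1"
    and "p permutes {1..n}"
    and "strongly_avoiding n p [3,1,2]"
    and "p n = 1"
  shows "\<forall>j \<in> {1..(n + 1) div 2}. p (n - j + 1) = j"
proof -
  have avoids: "\<not> contains_pattern n p [3,1,2]" "\<not> contains_pattern n (p \<circ> p) [3,1,2]"
    using assms(3) unfolding strongly_avoiding_def avoids_pattern_def by auto
  have "p (n - j + 1) = j" if "1 \<le> j" "j \<le> (n + 1) div 2" for j
    using that
  proof (induction j rule: less_induct)
    case (less j)
    show ?case
    proof (cases "j = 1")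
      case True
      then show ?thesis using assms by simp
    next
      case False
      then have "reversed_suffix n j (n - j + 1) p"
        using assms(2) avoids(1) less by unfold_locales auto
      then show ?thesis using reversed_suffix.next_value avoids(2) by blast
    qed
  qed
  then show ?thesis by auto
qed

end
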